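(* Let $p\ge1$ and let $X=(X,d,\mu)$ be an infinitesimally doubling metric measure space which is $p$-thick quasiconvex with constant $C\ge1$. Then every $u\in N^{1,p}(X)$ whose minimal $p$-weak upper gradient satisfies $g_u\le1$ almost everywhere has a $C$-Lipschitz representative.
   Context: A metric measure space is a proper metric space with a Borel regular outer measure positive and finite on balls; infinitesimally doubling means $\limsup_{r\to0}\mu(B(x,2r))/\mu(B(x,r))<\infty$ for $\mu$-a.e. $x$. $\operatorname{Mod}_p\Gamma=\inf\int\rho^pd\mu$ over Borel $\rho\ge0$ with $\int_\gamma\rho\ge1$ for all $\gamma\in\Gamma$. $N^{1,p}(X)$ is the Newtonian Sobolev space; $g_u$ the minimal $p$-weak upper gradient. For $E,F\subset X$ and $C\ge1$, $\Gamma(E,F;C)$ is the family of curves $\gamma:[0,1]\to X$ with $\gamma(0)\in E$, $\gamma(1)\in F$ and $\ell(\gamma)\le Cd(\gamma(0),\gamma(1))$. $X$ is $p$-thick quasiconvex with constant $C$ if $\operatorname{Mod}_p\Gamma(E,F;C)>0$ for all measurable $E,F$ of positive measure. *)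

theory Defs
  imports "HOL-Analysis.Analysis"
begin

text \<open>A metric measure space: the metric space is the type 'a (proper: closed balls are
compact), and M is a Borel measure on it (the Borel restriction of the Borel regular outer
measure; measurability w.r.t. the outer measure is represented via completion M) which is
positive and finite on balls.\<close>
definition mm_space :: "'a::metric_space measure \<Rightarrow> bool" where
  "mm_space M \<longleftrightarrow> (\<forall>(x::'a) r. compact (cball x r)) \<and> sets M = sets borel \<and>
     (\<forall>x r. 0 < r \<longrightarrow> 0 < emeasure M (ball x r) \<and> emeasure M (ball x r) < \<infinity>)"

definition infinitesimally_doubling :: "'a::metric_space measure \<Rightarrow> bool" where
  "infinitesimally_doubling M \<longleftrightarrow>
     (AE x in M. Limsup (at_right 0)
        (\<lambda>r::real. ereal (measure M (ball x (2 * r)) / measure M (ball x r))) < \<infinity>)"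

definition curve_length :: "(real \<Rightarrow> 'a::metric_space) \<Rightarrow> real \<Rightarrow> real \<Rightarrow> ennreal" where
  "curve_length g a b = (SUP ts \<in> {ts. sorted ts \<and> set ts \<subseteq> {a..b}}.
      (\<Sum>i < length ts - 1. ennreal (dist (g (ts ! i)) (g (ts ! Suc i)))))"

definition is_curve :: "(real \<Rightarrow> 'a::metric_space) \<Rightarrow> bool" where
  "is_curve g \<longleftrightarrow> continuous_on {0..1} g"

definition rectifiable_curve :: "(real \<Rightarrow> 'a::metric_space) \<Rightarrow> bool" where
  "rectifiable_curve g \<longleftrightarrow> is_curve g \<and> curve_length g 0 1 < \<infinity>"

definition ell :: "(real \<Rightarrow> 'a::metric_space) \<Rightarrow> real" where
  "ell g = enn2real (curve_length g 0 1)"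

definition arclength_param :: "(real \<Rightarrow> 'a::metric_space) \<Rightarrow> real \<Rightarrow> 'a" where
  "arclength_param g s = g (SOME t. t \<in> {0..1} \<and> enn2real (curve_length g 0 t) = s)"

definition line_integral :: "(real \<Rightarrow> 'a::metric_space) \<Rightarrow> ('a \<Rightarrow> ennreal) \<Rightarrow> ennreal" where
  "line_integral g \<rho> = (\<integral>\<^sup>+ s. indicator {0..ell g} s * \<rho> (arclength_param g s) \<partial>lborel)"

definition ennpow :: "ennreal \<Rightarrow> real \<Rightarrow> ennreal" where
  "ennpow x p = (if x = top then top else ennreal (enn2real x powr p))"

definition Mod :: "'a::metric_space measure \<Rightarrow> real \<Rightarrow> (real \<Rightarrow> 'a) set \<Rightarrow> ennreal" where
  "Mod M p \<Gamma> = (INF \<rho> \<in> {\<rho>. \<rho> \<in> borel_measurable borel \<and> (\<forall>g\<in>\<Gamma>. 1 \<le> line_integral g \<rho>)}.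
       \<integral>\<^sup>+ x. ennpow (\<rho> x) p \<partial>M)"

definition curve_family :: "'a::metric_space set \<Rightarrow> 'a set \<Rightarrow> real \<Rightarrow> (real \<Rightarrow> 'a) set" where
  "curve_family E F C = {g. is_curve g \<and> g 0 \<in> E \<and> g 1 \<in> F \<and>
       curve_length g 0 1 \<le> ennreal (C * dist (g 0) (g 1))}"

definition thick_quasiconvex :: "'a::metric_space measure \<Rightarrow> real \<Rightarrow> real \<Rightarrow> bool" where
  "thick_quasiconvex M p C \<longleftrightarrow> 1 \<le> C \<and>
     (\<forall>E F. E \<in> sets (completion M) \<longrightarrow> F \<in> sets (completion M) \<longrightarrow>
        0 < emeasure (completion M) E \<longrightarrow> 0 < emeasure (completion M) F \<longrightarrow>
        0 < Mod M p (curve_family E F C))"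

definition weak_upper_gradient :: "'a::metric_space measure \<Rightarrow> real \<Rightarrow> ('a \<Rightarrow> real) \<Rightarrow> ('a \<Rightarrow> ennreal) \<Rightarrow> bool" where
  "weak_upper_gradient M p u g \<longleftrightarrow> g \<in> borel_measurable borel \<and>
     Mod M p {\<gamma>. rectifiable_curve \<gamma> \<and>
        \<not> (ennreal \<bar>u (\<gamma> 0) - u (\<gamma> 1)\<bar> \<le> line_integral \<gamma> g)} = 0"

definition Newtonian :: "'a::metric_space measure \<Rightarrow> real \<Rightarrow> ('a \<Rightarrow> real) set" where
  "Newtonian M p = {u. u \<in> borel_measurable (completion M) \<and>
      (\<integral>\<^sup>+ x. ennreal (\<bar>u x\<bar> powr p) \<partial>M) < \<infinity> \<and>
      (\<exists>g. weak_upper_gradient M p u g \<and> (\<integral>\<^sup>+ x. ennpow (g x) p \<partial>M) < \<infinity>)}"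

definition minimal_weak_upper_gradient :: "'a::metric_space measure \<Rightarrow> real \<Rightarrow> ('a \<Rightarrow> real) \<Rightarrow> ('a \<Rightarrow> ennreal) \<Rightarrow> bool" where
  "minimal_weak_upper_gradient M p u g \<longleftrightarrow>
     weak_upper_gradient M p u g \<and> (\<integral>\<^sup>+ x. ennpow (g x) p \<partial>M) < \<infinity> \<and>
     (\<forall>h. weak_upper_gradient M p u h \<and> (\<integral>\<^sup>+ x. ennpow (h x) p \<partial>M) < \<infinity>
          \<longrightarrow> (AE x in M. g x \<le> h x))"

end

theory Submission
  imports Defs
begin

text \<open>Since \<open>g \<le> 1\<close> a.e., the density that is \<open>\<infinity>\<close> on \<open>{g > 1}\<close> and \<open>0\<close> elsewhere
has zero \<open>L\<^sup>p\<close> norm, so the curves meeting \<open>{g > 1}\<close> in positive length have modulus zero, as do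
the curves along which \<open>g\<close> fails the upper gradient inequality. Thick quasiconvexity therefore
yields, for any two sets \<open>E\<close>, \<open>F\<close> of positive measure, a curve from \<open>E\<close> to \<open>F\<close> of length at
most \<open>C\<close> times the distance of its endpoints along which \<open>|u(\<gamma> 0) - u(\<gamma> 1)| \<le> \<integral>\<^sub>\<gamma> g \<le> \<ell>(\<gamma>)\<close>.
Applying this to the countably many pairs of sets \<open>{u > b} \<inter> B(z, r)\<close>, \<open>{u < a} \<inter> B(z', r')\<close>
with \<open>z, z'\<close> in a countable dense set, rational \<open>r, r', a, b\<close> and \<open>C (d(z, z') + r + r') < b - a\<close>
shows that one set of each pair is null; off the union of these null sets \<open>u\<close> is
\<open>C\<close>-Lipschitz, and McShane's extension gives the representative.\<close>

text \<open>Neither \<open>f\<close> nor \<open>h\<close> need be measurable; this matters because the arc-length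
parametrisation in \<^const>\<open>line_integral\<close> is not known to be Borel.\<close>

lemma nn_integral_mono_where_finite:
  assumes k: "k \<in> borel_measurable M"
    and le: "\<And>x. x \<in> space M \<Longrightarrow> h x \<noteq> \<infinity> \<Longrightarrow> f x \<le> k x"
    and h: "integral\<^sup>N M h < \<infinity>"
  shows "integral\<^sup>N M f \<le> integral\<^sup>N M k"
  unfolding nn_integral_def[of M f]
proof (rule SUP_least)
  fix \<phi> assume "\<phi> \<in> {g. simple_function M g \<and> g \<le> f}"
  then have sf: "simple_function M \<phi>" and "\<phi> \<le> f" by auto
  define A where "A = {x \<in> space M. k x < \<phi> x}"
  have A: "A \<in> sets M"
    unfolding A_def using k borel_measurable_simple_function[OF sf] by measurable
  have "h x = \<infinity>" if "x \<in> A" for x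
  proof (rule ccontr)
    assume "h x \<noteq> \<infinity>"
    then have "\<phi> x \<le> k x"
      using le \<open>\<phi> \<le> f\<close> \<open>x \<in> A\<close> by (auto simp: A_def le_fun_def intro: order_trans)
    then show False using \<open>x \<in> A\<close> by (auto simp: A_def not_le[symmetric])
  qed
  then have "\<infinity> * emeasure M A \<le> integral\<^sup>N M h"
    using A by (subst nn_integral_cmult_indicator[symmetric])
      (auto intro!: nn_integral_mono split: split_indicator)
  then have "\<infinity> * emeasure M A < \<infinity>" using h by (rule le_less_trans)
  then have "A \<in> null_sets M" using A by (simp add: ennreal_mult_less_top null_setsI)
  then have "AE x in M. \<phi> x \<le> k x"
    by (rule AE_I') (auto simp: A_def not_le)
  then have "integral\<^sup>N M \<phi> \<le> integral\<^sup>N M k" by (rule nn_integral_mono_AE)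
  then show "integral\<^sup>S M \<phi> \<le> integral\<^sup>N M k" by (simp add: nn_integral_eq_simple_integral[OF sf])
qed

lemma line_integral_mono:
  assumes "\<And>x. \<rho> x \<le> \<rho>' x"
  shows "line_integral \<gamma> \<rho> \<le> line_integral \<gamma> \<rho>'"
  unfolding line_integral_def by (intro nn_integral_mono mult_left_mono assms) simp

lemma line_integral_le_ell:
  assumes "line_integral \<gamma> (\<lambda>x. if 1 < g x then \<infinity> else 0) < 1"
  shows "line_integral \<gamma> g \<le> ennreal (ell \<gamma>)"
proof -
  have "line_integral \<gamma> g \<le> integral\<^sup>N lborel (indicator {0..ell \<gamma>})"
    unfolding line_integral_def
  proof (rule nn_integral_mono_where_finite)
    show "integral\<^sup>N lborel
        (\<lambda>s. indicator {0..ell \<gamma>} s * (if 1 < g (arclength_param \<gamma> s) then \<infinity> else 0)) < \<infinity>"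
      using assms by (simp add: line_integral_def order_less_trans)
  qed (auto split: split_indicator if_split_asm simp: not_less)
  also have "\<dots> = ennreal (ell \<gamma>)" by (simp add: ell_def)
  finally show ?thesis .
qed

lemma Mod_mono_up_to_null_density:
  assumes \<rho>\<^sub>0: "\<rho>\<^sub>0 \<in> borel_measurable borel" "AE x in M. \<rho>\<^sub>0 x = 0"
    and cover: "\<And>\<gamma>. \<gamma> \<in> \<Gamma> \<Longrightarrow> \<gamma> \<in> \<Gamma>' \<or> 1 \<le> line_integral \<gamma> \<rho>\<^sub>0"
  shows "Mod M p \<Gamma> \<le> Mod M p \<Gamma>'"
  unfolding Mod_def[of M p \<Gamma>']
proof (rule INF_greatest)
  fix \<rho> assume \<rho>: "\<rho> \<in> {\<rho>. \<rho> \<in> borel_measurable borel \<and> (\<forall>\<gamma>\<in>\<Gamma>'. 1 \<le> line_integral \<gamma> \<rho>)}"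
  have "1 \<le> line_integral \<gamma> (\<lambda>x. \<rho> x + \<rho>\<^sub>0 x)" if "\<gamma> \<in> \<Gamma>" for \<gamma>
    using cover[OF that] \<rho> line_integral_mono[of \<rho> "\<lambda>x. \<rho> x + \<rho>\<^sub>0 x" \<gamma>]
      line_integral_mono[of \<rho>\<^sub>0 "\<lambda>x. \<rho> x + \<rho>\<^sub>0 x" \<gamma>]
    by (auto intro: order_trans)
  then have "Mod M p \<Gamma> \<le> (\<integral>\<^sup>+ x. ennpow (\<rho> x + \<rho>\<^sub>0 x) p \<partial>M)"
    unfolding Mod_def using \<rho> \<rho>\<^sub>0(1) by (intro INF_lower) auto
  also have "\<dots> = (\<integral>\<^sup>+ x. ennpow (\<rho> x) p \<partial>M)"
    by (rule nn_integral_cong_AE) (use \<rho>\<^sub>0(2) in eventually_elim, simp)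
  finally show "Mod M p \<Gamma> \<le> (\<integral>\<^sup>+ x. ennpow (\<rho> x) p \<partial>M)" .
qed

definition lipschitz_pairs :: "'a::metric_space measure \<Rightarrow> real \<Rightarrow> ('a \<Rightarrow> real) \<Rightarrow> bool" where
  "lipschitz_pairs N C u \<longleftrightarrow> (\<forall>E\<in>sets N. \<forall>F\<in>sets N. 0 < emeasure N E \<longrightarrow> 0 < emeasure N F \<longrightarrow>
     (\<exists>x\<in>E. \<exists>y\<in>F. \<bar>u x - u y\<bar> \<le> C * dist x y))"

lemma thick_quasiconvex_lipschitz_pairs:
  assumes tq: "thick_quasiconvex M p C" and wug: "weak_upper_gradient M p u g"
    and g: "AE x in M. g x \<le> 1"
  shows "lipschitz_pairs (completion M) C u"
  unfolding lipschitz_pairs_def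
proof (intro ballI impI)
  fix E F assume E: "E \<in> sets (completion M)" "0 < emeasure (completion M) E"
    and F: "F \<in> sets (completion M)" "0 < emeasure (completion M) F"
  define \<rho>\<^sub>g :: "'a \<Rightarrow> ennreal" where "\<rho>\<^sub>g x = (if 1 < g x then \<infinity> else 0)" for x
  define \<Gamma>\<^sub>b\<^sub>a\<^sub>d where "\<Gamma>\<^sub>b\<^sub>a\<^sub>d = {\<gamma>. rectifiable_curve \<gamma> \<and>
    \<not> ennreal \<bar>u (\<gamma> 0) - u (\<gamma> 1)\<bar> \<le> line_integral \<gamma> g}"
  have "1 \<le> C" "0 < Mod M p (curve_family E F C)" using tq E F by (auto simp: thick_quasiconvex_def)
  have "Mod M p \<Gamma>\<^sub>b\<^sub>a\<^sub>d = 0" using wug by (simp add: weak_upper_gradient_def \<Gamma>\<^sub>b\<^sub>a\<^sub>d_def)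
  have "\<exists>\<gamma>\<in>curve_family E F C. \<gamma> \<notin> \<Gamma>\<^sub>b\<^sub>a\<^sub>d \<and> line_integral \<gamma> \<rho>\<^sub>g < 1"
  proof (rule ccontr)
    assume "\<not> ?thesis"
    moreover have "\<rho>\<^sub>g \<in> borel_measurable borel"
      using wug unfolding weak_upper_gradient_def \<rho>\<^sub>g_def by (auto intro: measurable_If)
    moreover have "AE x in M. \<rho>\<^sub>g x = 0" using g by eventually_elim (simp add: \<rho>\<^sub>g_def)
    ultimately have "Mod M p (curve_family E F C) \<le> Mod M p \<Gamma>\<^sub>b\<^sub>a\<^sub>d"
      by (intro Mod_mono_up_to_null_density) (auto simp: not_less)
    then show False
      using \<open>0 < Mod M p (curve_family E F C)\<close> \<open>Mod M p \<Gamma>\<^sub>b\<^sub>a\<^sub>d = 0\<close> by simp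
  qed
  then obtain \<gamma> where "\<gamma> \<in> curve_family E F C" "\<gamma> \<notin> \<Gamma>\<^sub>b\<^sub>a\<^sub>d" "line_integral \<gamma> \<rho>\<^sub>g < 1" by blast
  then have \<gamma>: "is_curve \<gamma>" "\<gamma> 0 \<in> E" "\<gamma> 1 \<in> F"
    and len: "curve_length \<gamma> 0 1 \<le> ennreal (C * dist (\<gamma> 0) (\<gamma> 1))"
    by (auto simp: curve_family_def)
  have "C * dist (\<gamma> 0) (\<gamma> 1) \<ge> 0" using \<open>1 \<le> C\<close> by simp
  have "rectifiable_curve \<gamma>"
    using \<gamma>(1) len by (auto simp: rectifiable_curve_def intro: le_less_trans)
  then have "ennreal \<bar>u (\<gamma> 0) - u (\<gamma> 1)\<bar> \<le> line_integral \<gamma> g"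
    using \<open>\<gamma> \<notin> \<Gamma>\<^sub>b\<^sub>a\<^sub>d\<close> by (simp add: \<Gamma>\<^sub>b\<^sub>a\<^sub>d_def)
  also have "\<dots> \<le> ennreal (ell \<gamma>)"
    using \<open>line_integral \<gamma> \<rho>\<^sub>g < 1\<close> unfolding \<rho>\<^sub>g_def by (rule line_integral_le_ell)
  also have "\<dots> \<le> ennreal (C * dist (\<gamma> 0) (\<gamma> 1))"
    using enn2real_mono[OF len] \<open>C * dist (\<gamma> 0) (\<gamma> 1) \<ge> 0\<close> by (simp add: ell_def ennreal_leI)
  finally have "\<bar>u (\<gamma> 0) - u (\<gamma> 1)\<bar> \<le> C * dist (\<gamma> 0) (\<gamma> 1)"
    using \<open>C * dist (\<gamma> 0) (\<gamma> 1) \<ge> 0\<close> by (simp add: ennreal_le_iff)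
  then show "\<exists>x\<in>E. \<exists>y\<in>F. \<bar>u x - u y\<bar> \<le> C * dist x y" using \<gamma>(2,3) by blast
qed

lemma lipschitz_pairs_null_or_null:
  assumes "lipschitz_pairs N C u" "E \<in> sets N" "F \<in> sets N"
    and "\<And>x y. x \<in> E \<Longrightarrow> y \<in> F \<Longrightarrow> C * dist x y < \<bar>u x - u y\<bar>"
  shows "E \<in> null_sets N \<or> F \<in> null_sets N"
  using assms unfolding lipschitz_pairs_def by (metis not_le null_setsI zero_less_iff_neq_zero)

lemma countable_dense_if_cball_compact:
  assumes "\<And>x r. compact (cball x r :: 'a set)"
  obtains D :: "'a::metric_space set" where "countable D" "closure D = UNIV"
proof -
  fix x0 :: 'a
  have "\<exists>K. finite K \<and> cball x0 (real n) \<subseteq> (\<Union>x\<in>K. ball x (1 / Suc k))" for n k :: nat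
    using seq_compact_imp_totally_bounded[OF compact_imp_seq_compact[OF assms[of x0 "real n"]],
        rule_format, of "1 / Suc k"]
    by auto
  then obtain K where K: "\<And>n k. finite (K n k)"
    "\<And>n k. cball x0 (real n) \<subseteq> (\<Union>x\<in>K n k. ball x (1 / Suc k))"
    by metis
  have "x \<in> closure (\<Union>n k. K n k)" for x
    unfolding closure_approachable
  proof (intro allI impI)
    fix e :: real assume "0 < e"
    obtain n :: nat where "dist x0 x \<le> real n" using real_arch_simple by blast
    moreover obtain k :: nat where "1 / real (Suc k) < e" using \<open>0 < e\<close> by (metis nat_approx_posE)
    moreover obtain z where "z \<in> K n k" "x \<in> ball z (1 / Suc k)"
      using K(2)[of n k] calculation(1) by fastforce
    ultimately show "\<exists>z\<in>(\<Union>n k. K n k). dist z x < e" by (force simp: dist_commute)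
  qed
  then have "closure (\<Union>n k. K n k) = UNIV" by blast
  moreover have "countable (\<Union>n k. K n k)" by (simp add: K(1) countable_finite)
  ultimately show ?thesis using that by blast
qed

lemma McShane_lipschitz_extension:
  fixes f :: "'a::metric_space \<Rightarrow> real"
  assumes lip: "C-lipschitz_on S f" and "S \<noteq> {}"
  obtains v where "C-lipschitz_on UNIV v" "\<And>x. x \<in> S \<Longrightarrow> v x = f x"
proof -
  define v where "v z = (INF x\<in>S. f x + C * dist z x)" for z
  have C: "0 \<le> C" using lip by (rule lipschitz_on_nonneg)
  have f_le: "f y \<le> f x + C * dist y x" if "x \<in> S" "y \<in> S" for x y
    using lipschitz_onD[OF lip that(2,1)] by (simp add: dist_real_def)
  obtain x0 where "x0 \<in> S" using \<open>S \<noteq> {}\<close> by blast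
  have bdd: "bdd_below ((\<lambda>x. f x + C * dist z x) ` S)" for z
  proof (rule bdd_belowI2)
    fix x assume "x \<in> S"
    have "C * dist x0 x \<le> C * dist z x0 + C * dist z x"
      using mult_left_mono[OF dist_triangle3[of x0 x z] C] by (simp add: distrib_left)
    then show "f x0 - C * dist z x0 \<le> f x + C * dist z x"
      using f_le[OF \<open>x \<in> S\<close> \<open>x0 \<in> S\<close>] by linarith
  qed
  have v_le: "v z \<le> v w + C * dist z w" for z w
  proof -
    have "v z - C * dist z w \<le> f x + C * dist w x" if "x \<in> S" for x
    proof -
      have "v z \<le> f x + C * dist z x" unfolding v_def by (rule cINF_lower[OF bdd that])
      moreover have "C * dist z x \<le> C * dist w x + C * dist z w"
        using mult_left_mono[OF dist_triangle[of z x w] C] by (simp add: distrib_left)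
      ultimately show ?thesis by linarith
    qed
    then have "v z - C * dist z w \<le> v w"
      unfolding v_def[of w] using \<open>S \<noteq> {}\<close> by (intro cINF_greatest) auto
    then show ?thesis by linarith
  qed
  have "C-lipschitz_on UNIV v"
  proof (rule lipschitz_onI)
    show "dist (v z) (v w) \<le> C * dist z w" for z w
      using v_le[of z w] v_le[of w z] by (simp add: dist_real_def dist_commute abs_le_iff)
  qed (rule C)
  moreover have "v x = f x" if "x \<in> S" for x
  proof (rule antisym)
    show "v x \<le> f x" using cINF_lower[OF bdd that, of x] by (simp add: v_def)
    show "f x \<le> v x"
      unfolding v_def using \<open>S \<noteq> {}\<close> f_le[OF _ that] by (intro cINF_greatest) auto
  qed
  ultimately show ?thesis using that by blast
qed

lemma dense_rational_ball_separation:
  fixes x y :: "'a::metric_space"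
  assumes dense: "closure D = UNIV"
    and C: "0 \<le> C" and gap: "C * dist x y < s - t"
  obtains z r z' r' a b where "z \<in> D" "r \<in> \<rat>" "z' \<in> D" "r' \<in> \<rat>" "a \<in> \<rat>" "b \<in> \<rat>"
    "dist z x < r" "dist z' y < r'" "t < a" "b < s" "C * (dist z z' + r + r') < b - a"
proof -
  define \<delta> where "\<delta> = s - t - C * dist x y"
  define \<epsilon> where "\<epsilon> = \<delta> / (8 * (C + 1))"
  have "0 < \<delta>" "0 < \<epsilon>" using gap C by (simp_all add: \<delta>_def \<epsilon>_def)
  obtain a where a: "a \<in> \<rat>" "t < a" "a < t + \<delta> / 4"
    using Rats_dense_in_real[of t "t + \<delta> / 4"] \<open>0 < \<delta>\<close> by auto
  obtain b where b: "b \<in> \<rat>" "s - \<delta> / 4 < b" "b < s"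
    using Rats_dense_in_real[of "s - \<delta> / 4" s] \<open>0 < \<delta>\<close> by auto
  obtain z where z: "z \<in> D" "dist x z < \<epsilon>"
    using dense \<open>0 < \<epsilon>\<close> closure_approachable[of x D] by (auto simp: dist_commute)
  obtain r where r: "r \<in> \<rat>" "dist x z < r" "r < \<epsilon>" using Rats_dense_in_real z(2) by blast
  obtain z' where z': "z' \<in> D" "dist y z' < \<epsilon>"
    using dense \<open>0 < \<epsilon>\<close> closure_approachable[of y D] by (auto simp: dist_commute)
  obtain r' where r': "r' \<in> \<rat>" "dist y z' < r'" "r' < \<epsilon>" using Rats_dense_in_real z'(2) by blast
  have "dist z z' \<le> dist x z + dist x y + dist y z'"
    using dist_triangle[of z z' x] dist_triangle[of x z' y] by (simp add: dist_commute)
  then have "C * (dist z z' + r + r') \<le> C * (dist x y + 4 * \<epsilon>)"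
    using z r z' r' C by (intro mult_left_mono) auto
  also have "\<dots> \<le> C * dist x y + \<delta> / 2"
    using C \<open>0 < \<delta>\<close> by (simp add: \<epsilon>_def field_simps)
  also have "\<dots> < b - a" using a b \<delta>_def by linarith
  finally show ?thesis using that z z' r r' a b by (simp add: dist_commute)
qed

lemma lipschitz_pairs_separated_balls_null:
  assumes pair: "lipschitz_pairs N C u" and C: "0 \<le> C"
    and space: "space N = UNIV" and balls: "\<And>x r. ball x r \<in> sets N"
    and u: "u \<in> borel_measurable N"
    and gap: "C * (dist z z' + r + r') < b - a"
  shows "{x. b < u x} \<inter> ball z r \<in> null_sets N \<or> {y. u y < a} \<inter> ball z' r' \<in> null_sets N"
proof (rule lipschitz_pairs_null_or_null[OF pair])
  have "{x\<in>space N. b < u x} \<in> sets N" "{y\<in>space N. u y < a} \<in> sets N"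
    using u by measurable
  then show "{x. b < u x} \<inter> ball z r \<in> sets N" "{y. u y < a} \<inter> ball z' r' \<in> sets N"
    using balls by (auto simp: space)
  show "C * dist x y < \<bar>u x - u y\<bar>" if "x \<in> {x. b < u x} \<inter> ball z r" "y \<in> {y. u y < a} \<inter> ball z' r'"
    for x y
  proof -
    have "C * dist x y \<le> C * (dist z z' + r + r')"
      using that dist_triangle[of x y z] dist_triangle[of z y z'] C
      by (intro mult_left_mono) (auto simp: dist_commute)
    also have "\<dots> < b - a" by (rule gap)
    also have "\<dots> \<le> \<bar>u x - u y\<bar>" using that by auto
    finally show ?thesis .
  qed
qed

lemma lipschitz_on_outside_null_set:
  fixes u :: "'a::metric_space \<Rightarrow> real" and N :: "'a measure" and D :: "'a set"
  assumes D: "countable D" "closure D = UNIV"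
    and C: "0 \<le> C"
    and space: "space N = UNIV" and balls: "\<And>x r. ball x r \<in> sets N"
    and u: "u \<in> borel_measurable N"
    and pair: "lipschitz_pairs N C u"
  obtains Z where "Z \<in> null_sets N" "C-lipschitz_on (- Z) u"
proof -
  define T where "T = {(z, r, z', r', a, b). z \<in> D \<and> r \<in> \<rat> \<and> z' \<in> D \<and> r' \<in> \<rat> \<and> a \<in> \<rat> \<and> b \<in> \<rat> \<and>
    C * (dist z z' + r + r') < b - a}"
  define E :: "'a \<times> real \<times> 'a \<times> real \<times> real \<times> real \<Rightarrow> 'a set"
    where "E = (\<lambda>(z, r, z', r', a, b). {x. b < u x} \<inter> ball z r)"
  define F :: "'a \<times> real \<times> 'a \<times> real \<times> real \<times> real \<Rightarrow> 'a set"
    where "F = (\<lambda>(z, r, z', r', a, b). {y. u y < a} \<inter> ball z' r')"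
  define Z where "Z = (\<Union>t\<in>T. if E t \<in> null_sets N then E t else F t)"
  have "countable T"
  proof (rule countable_subset)
    show "T \<subseteq> D \<times> \<rat> \<times> D \<times> \<rat> \<times> \<rat> \<times> \<rat>" by (auto simp: T_def)
  qed (intro countable_SIGMA D(1) countable_rat)
  have one_null: "E t \<in> null_sets N \<or> F t \<in> null_sets N" if "t \<in> T" for t
  proof -
    obtain z r z' r' a b where t: "t = (z, r, z', r', a, b)" by (cases t)
    have "C * (dist z z' + r + r') < b - a" using that by (simp add: t T_def)
    then show ?thesis
      unfolding t E_def F_def prod.case
      by (rule lipschitz_pairs_separated_balls_null[OF pair C space balls u])
  qed
  have "Z \<in> null_sets N"
    unfolding Z_def
  proof (rule null_sets_UN'[OF \<open>countable T\<close>])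
    fix t assume "t \<in> T"
    then show "(if E t \<in> null_sets N then E t else F t) \<in> null_sets N" using one_null[of t] by auto
  qed
  moreover have le: "u x - u y \<le> C * dist x y" if "x \<notin> Z" "y \<notin> Z" for x y
  proof (rule ccontr)
    assume "\<not> u x - u y \<le> C * dist x y"
    then have "C * dist x y < u x - u y" by simp
    then obtain z r z' r' a b where "z \<in> D" "r \<in> \<rat>" "z' \<in> D" "r' \<in> \<rat>" "a \<in> \<rat>" "b \<in> \<rat>"
      "dist z x < r" "dist z' y < r'" "u y < a" "b < u x" "C * (dist z z' + r + r') < b - a"
      using dense_rational_ball_separation[OF D(2) C, of x y "u x" "u y"] by blast
    then have "(z, r, z', r', a, b) \<in> T" "x \<in> E (z, r, z', r', a, b)" "y \<in> F (z, r, z', r', a, b)"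
      by (auto simp: T_def E_def F_def)
    then show False using that unfolding Z_def by (auto split: if_splits)
  qed
  have "C-lipschitz_on (- Z) u"
  proof (rule lipschitz_onI[OF _ C])
    show "dist (u x) (u y) \<le> C * dist x y" if "x \<in> - Z" "y \<in> - Z" for x y
      using le[of x y] le[of y x] that by (simp add: dist_real_def dist_commute abs_le_iff)
  qed
  ultimately show ?thesis using that by blast
qed

lemma lipschitz_pairs_imp_lipschitz_representative:
  fixes u :: "'a::metric_space \<Rightarrow> real" and N :: "'a measure" and D :: "'a set"
  assumes D: "countable D" "closure D = UNIV"
    and C: "0 \<le> C"
    and space: "space N = UNIV" and balls: "\<And>x r. ball x r \<in> sets N"
    and u: "u \<in> borel_measurable N"
    and pair: "lipschitz_pairs N C u"
    and nontrivial: "UNIV \<notin> null_sets N"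
  obtains v where "C-lipschitz_on UNIV v" "AE x in N. u x = v x"
proof -
  obtain Z where Z: "Z \<in> null_sets N" "C-lipschitz_on (- Z) u"
    by (rule lipschitz_on_outside_null_set[OF D C space balls u pair]) (rule that)
  have "- Z \<noteq> {}" using Z(1) nontrivial by (metis Compl_empty_eq double_complement)
  obtain v where v: "C-lipschitz_on UNIV v" "\<And>x. x \<in> - Z \<Longrightarrow> v x = u x"
    by (rule McShane_lipschitz_extension[OF Z(2) \<open>- Z \<noteq> {}\<close>]) (rule that)
  have "AE x in N. u x = v x" using AE_not_in[OF Z(1)] by eventually_elim (simp add: v(2))
  with v(1) show ?thesis by (rule that)
qed

theorem proposition3p2:
  fixes M :: "'a::metric_space measure" and p C :: real and u :: "'a \<Rightarrow> real"
  assumes "1 \<le> p"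
    and "mm_space M"
    and "infinitesimally_doubling M"
    and "thick_quasiconvex M p C"
    and "u \<in> Newtonian M p"
    and "\<exists>g. minimal_weak_upper_gradient M p u g \<and> (AE x in M. g x \<le> 1)"
  shows "\<exists>v. C-lipschitz_on UNIV v \<and> (AE x in M. u x = v x)"
proof -
  obtain g where wug: "weak_upper_gradient M p u g" and g: "AE x in M. g x \<le> 1"
    using assms(6) unfolding minimal_weak_upper_gradient_def by blast
  have sets: "sets M = sets borel" and cball: "\<And>x r. compact (cball (x::'a) r)"
    and balls: "\<And>x r. 0 < r \<Longrightarrow> 0 < emeasure M (ball x r)"
    using assms(2) unfolding mm_space_def by auto
  have "0 \<le> C" using assms(4) by (simp add: thick_quasiconvex_def)
  obtain D :: "'a set" where D: "countable D" "closure D = UNIV"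
    by (rule countable_dense_if_cball_compact[OF cball]) (rule that)
  have "space (completion M) = UNIV" "\<And>x r. ball x r \<in> sets (completion M)"
    using sets_eq_imp_space_eq[OF sets] sets by auto
  moreover have "u \<in> borel_measurable (completion M)" using assms(5) by (simp add: Newtonian_def)
  moreover have "UNIV \<notin> null_sets (completion M)"
    using balls[of 1 undefined] null_sets_completion_subset[of "ball undefined 1" UNIV M] sets
    by (auto simp: null_sets_completion_iff null_sets_def)
  ultimately obtain v where "C-lipschitz_on UNIV v" "AE x in completion M. u x = v x"
    using lipschitz_pairs_imp_lipschitz_representative[OF D \<open>0 \<le> C\<close>]
      thick_quasiconvex_lipschitz_pairs[OF assms(4) wug g] by blast
  then show ?thesis by (auto simp: AE_completion_iff)
qed

end
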